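(* Let $G=(V,E)$ be an undirected graph (finite or infinite) and $M=M(S)$ a multiplex of $G$ generated by the simplex $S=(V_S,E_S)$. Then $M$ is maximal if and only if the set $\widetilde M$ of vertices spanned by $M$ is a ``strong'' partitive set of $G$.
   Context: A graph $G=(V,E)$ has vertex set $V$ and edge set $E\subseteq V^2$; it is undirected if $E$ is irreflexive and symmetric; $ab$ denotes $\{(a,b),(b,a)\}$. For a set $A$ of ordered pairs, $\widetilde A$ is the set of vertices $a$ with $(a,b)\in A$ or $(b,a)\in A$ for some $b$. A set $X\subseteq V$ is a partitive set of $G$ if for all $a,b\in X$ and $c\in V\setminus X$: $(a,c)\in E\Leftrightarrow(b,c)\in E$ and $(c,a)\in E\Leftrightarrow(c,b)\in E$; $I(G)$ is the class of partitive sets. A ``strong'' partitive set is an $X\in I(G)$ such that for every $Y\in I(G)$ with $X\cap Y\neq\emptyset$, $X\subseteq Y$ or $Y\subseteq X$. Implication classes: on $E$ define $(a,b)\Gamma(a',b')$ iff either $a=a'$ and $(b,b')\notin E$, or $b=b'$ and $(a,a')\notin E$; the classes of the transitive closure $\Gamma^*$ are the implication classes. For an implication class $A$, $A^{-1}=\{(b,a):(a,b)\in A\}$ and the color class is $\widehat A=A\cup A^{-1}$. A simplex of rank $r\ge1$ is a complete sub-graph $S=(V_S,E_S)$ of $G$ on $r+1$ vertices whose distinct undirected edges lie in distinct color classes; it is maximal if not properly contained in a larger simplex. The multiplex generated by $S$ is $M(S)=\bigcup\{\widehat A:\widehat A\text{ a color class},\ \widehat A\cap E_S\neq\emptyset\}$;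 the multiplex is maximal if $S$ is maximal. *)

theory Defs
  imports Main
begin

definition undirected_graph :: "'a set \<Rightarrow> ('a \<times> 'a) set \<Rightarrow> bool" where
  "undirected_graph V E \<longleftrightarrow> E \<subseteq> V \<times> V \<and> irrefl E \<and> sym E"

definition partitive :: "'a set \<Rightarrow> ('a \<times> 'a) set \<Rightarrow> 'a set \<Rightarrow> bool" where
  "partitive V E X \<longleftrightarrow> X \<subseteq> V \<and>
     (\<forall>a\<in>X. \<forall>b\<in>X. \<forall>c\<in>V - X.
        ((a, c) \<in> E \<longleftrightarrow> (b, c) \<in> E) \<and> ((c, a) \<in> E \<longleftrightarrow> (c, b) \<in> E))"

definition strong_partitive :: "'a set \<Rightarrow> ('a \<times> 'a) set \<Rightarrow> 'a set \<Rightarrow> bool" where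
  "strong_partitive V E X \<longleftrightarrow> partitive V E X \<and>
     (\<forall>Y. partitive V E Y \<longrightarrow> X \<inter> Y \<noteq> {} \<longrightarrow> X \<subseteq> Y \<or> Y \<subseteq> X)"

definition Gamma :: "('a \<times> 'a) set \<Rightarrow> (('a \<times> 'a) \<times> ('a \<times> 'a)) set" where
  "Gamma E = {((a, b), (a', b')). (a, b) \<in> E \<and> (a', b') \<in> E \<and>
      ((a = a' \<and> (b, b') \<notin> E) \<or> (b = b' \<and> (a, a') \<notin> E))}"

definition implication_class :: "('a \<times> 'a) set \<Rightarrow> ('a \<times> 'a) \<Rightarrow> ('a \<times> 'a) set" where
  "implication_class E e = {f \<in> E. (e, f) \<in> (Gamma E)\<^sup>*}"

definition implication_classes :: "('a \<times> 'a) set \<Rightarrow> ('a \<times> 'a) set set" where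
  "implication_classes E = implication_class E ` E"

definition color_classes :: "('a \<times> 'a) set \<Rightarrow> ('a \<times> 'a) set set" where
  "color_classes E = (\<lambda>A. A \<union> A\<inverse>) ` implication_classes E"

definition complete_edges :: "'a set \<Rightarrow> ('a \<times> 'a) set" where
  "complete_edges Vs = {(a, b). a \<in> Vs \<and> b \<in> Vs \<and> a \<noteq> b}"

text \<open>A simplex (of rank r = card Vs - 1 \<ge> 1), given by its vertex set: a complete
  subgraph on finitely many (at least 2) vertices whose distinct undirected edges
  lie in distinct color classes.\<close>
definition simplex :: "'a set \<Rightarrow> ('a \<times> 'a) set \<Rightarrow> 'a set \<Rightarrow> bool" where
  "simplex V E Vs \<longleftrightarrow> finite Vs \<and> card Vs \<ge> 2 \<and> Vs \<subseteq> V \<and>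
     complete_edges Vs \<subseteq> E \<and>
     (\<forall>a b c d. (a, b) \<in> complete_edges Vs \<longrightarrow> (c, d) \<in> complete_edges Vs \<longrightarrow>
        {a, b} \<noteq> {c, d} \<longrightarrow>
        \<not> (\<exists>C \<in> color_classes E. (a, b) \<in> C \<and> (c, d) \<in> C))"

definition maximal_simplex :: "'a set \<Rightarrow> ('a \<times> 'a) set \<Rightarrow> 'a set \<Rightarrow> bool" where
  "maximal_simplex V E Vs \<longleftrightarrow> simplex V E Vs \<and> \<not> (\<exists>Vs'. simplex V E Vs' \<and> Vs \<subset> Vs')"

definition multiplex :: "('a \<times> 'a) set \<Rightarrow> 'a set \<Rightarrow> ('a \<times> 'a) set" where
  "multiplex E Vs = \<Union> {C \<in> color_classes E. C \<inter> complete_edges Vs \<noteq> {}}"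

definition maximal_multiplex :: "'a set \<Rightarrow> ('a \<times> 'a) set \<Rightarrow> ('a \<times> 'a) set \<Rightarrow> bool" where
  "maximal_multiplex V E M \<longleftrightarrow> (\<exists>Vs. maximal_simplex V E Vs \<and> M = multiplex E Vs)"

definition spanned :: "('a \<times> 'a) set \<Rightarrow> 'a set" where
  "spanned A = {a. \<exists>b. (a, b) \<in> A \<or> (b, a) \<in> A}"

end

theory Submission
  imports Defs
begin

(*
  Write X for the vertex set spanned by M(S). Edges of one color class are linked by a chain
  of Gamma-steps, each of which keeps one endpoint and moves the other one to a non-neighbour.
  So a vertex c outside X is adjacent to both or to neither end of every edge of M(S):
  otherwise (u, w) Gamma (u, c) would put c into X. As every edge of M(S) is linked in this way
  to an edge of the complete graph on S, X is partitive. Conversely, a partitive set containing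
  both ends of an edge contains both ends of every edge linked to it, so X is the least
  partitive set containing S.

  Let S be maximal and let a partitive set Y meet X without being comparable to it. Then a
  vertex r of Y - X is joined to all of X, and the edges from r to S have new and pairwise
  distinct colors: a Gamma-chain from (s, r) to (s', r) stays inside the complete join of
  Y - X with A, where A is X Int Y or X - Y according to where s and s' lie, so it carries
  (c, s) to (c, s') for a vertex c of S adjacent to all of A. Thus S + r is a larger simplex.
  If instead S lies properly inside a simplex T, a vertex of T - S is never spanned by M(S),
  so exchanging a vertex of S for it yields a simplex whose spanned set meets X without being
  comparable to it.
*)

text \<open>The color class of e is A \<union> A\<inverse> for the implication class A of e, hence the two
  orientations of f.\<close>
definition same_color :: "('a \<times> 'a) set \<Rightarrow> 'a \<times> 'a \<Rightarrow> 'a \<times> 'a \<Rightarrow> bool" where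
  "same_color E e f \<longleftrightarrow> e \<in> E \<and> f \<in> E \<and>
     ((e, f) \<in> (Gamma E)\<^sup>* \<or> (e, prod.swap f) \<in> (Gamma E)\<^sup>*)"

lemma Gamma_iff [simp]:
  "((a, b), (a', b')) \<in> Gamma E \<longleftrightarrow> (a, b) \<in> E \<and> (a', b') \<in> E \<and>
     (a = a' \<and> (b, b') \<notin> E \<or> b = b' \<and> (a, a') \<notin> E)"
  by (simp add: Gamma_def)

lemma sym_Gamma: "sym E \<Longrightarrow> sym (Gamma E)"
  by (auto simp: Gamma_def sym_def)

lemma Gamma_swap: "sym E \<Longrightarrow> (e, f) \<in> Gamma E \<Longrightarrow> (prod.swap e, prod.swap f) \<in> Gamma E"
  by (cases e; cases f) (auto simp: Gamma_def dest: symD)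

lemma rtrancl_Gamma_swap:
  assumes "sym E" "(e, f) \<in> (Gamma E)\<^sup>*"
  shows "(prod.swap e, prod.swap f) \<in> (Gamma E)\<^sup>*"
  using assms(2)
  by (induction rule: rtrancl_induct) (auto dest: Gamma_swap[OF assms(1)] intro: rtrancl_into_rtrancl)

lemma rtrancl_Gamma_in_edges: "(e, f) \<in> (Gamma E)\<^sup>* \<Longrightarrow> e \<in> E \<Longrightarrow> f \<in> E"
  by (erule rtranclE) (auto simp: Gamma_def)

lemma swap_mem_sym: "sym E \<Longrightarrow> prod.swap e \<in> E \<longleftrightarrow> e \<in> E"
  by (cases e) (auto dest: symD)

lemma same_color_if_rtrancl_Gamma: "(e, f) \<in> (Gamma E)\<^sup>* \<Longrightarrow> e \<in> E \<Longrightarrow> same_color E e f"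
  unfolding same_color_def using rtrancl_Gamma_in_edges by blast

lemma same_color_refl: "e \<in> E \<Longrightarrow> same_color E e e"
  by (simp add: same_color_def)

lemma same_color_swap_right: "sym E \<Longrightarrow> same_color E e (prod.swap f) \<longleftrightarrow> same_color E e f"
  by (auto simp: same_color_def swap_mem_sym)

lemma same_color_sym: assumes "sym E" "same_color E e f" shows "same_color E f e"
proof -
  have sym_rt: "sym ((Gamma E)\<^sup>*)"
    using sym_rtrancl[OF sym_Gamma[OF assms(1)]] .
  have "(f, e) \<in> (Gamma E)\<^sup>* \<or> (prod.swap f, e) \<in> (Gamma E)\<^sup>*"
    using assms(2) symD[OF sym_rt] unfolding same_color_def by blast
  then have "(f, e) \<in> (Gamma E)\<^sup>* \<or> (f, prod.swap e) \<in> (Gamma E)\<^sup>*"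
    using rtrancl_Gamma_swap[OF assms(1), of "prod.swap f" e] by auto
  then show ?thesis
    using assms(2) unfolding same_color_def by blast
qed

lemma same_color_swap_left: "sym E \<Longrightarrow> same_color E (prod.swap e) f \<longleftrightarrow> same_color E e f"
  by (metis same_color_sym same_color_swap_right)

lemma same_color_trans:
  assumes "sym E" "same_color E e f" "same_color E f g" shows "same_color E e g"
proof -
  have swapped: "(prod.swap f, prod.swap g) \<in> (Gamma E)\<^sup>* \<or> (prod.swap f, g) \<in> (Gamma E)\<^sup>*"
    using assms(3) rtrancl_Gamma_swap[OF assms(1), of f] unfolding same_color_def by fastforce
  have "(e, g) \<in> (Gamma E)\<^sup>* \<or> (e, prod.swap g) \<in> (Gamma E)\<^sup>*"
    using assms(2,3) swapped unfolding same_color_def by (meson rtrancl_trans)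
  then show ?thesis
    using assms(2,3) unfolding same_color_def by blast
qed

lemma same_color_flip_left [simp]: "sym E \<Longrightarrow> same_color E (b, a) f \<longleftrightarrow> same_color E (a, b) f"
  using same_color_swap_left[of E "(a, b)"] by simp

lemma same_color_flip_right [simp]: "sym E \<Longrightarrow> same_color E e (b, a) \<longleftrightarrow> same_color E e (a, b)"
  using same_color_swap_right[of E e "(a, b)"] by simp

lemma mem_color_class_iff:
  assumes "sym E" "g \<in> E"
  shows "e \<in> implication_class E g \<union> (implication_class E g)\<inverse> \<longleftrightarrow> same_color E g e"
  using assms by (cases e) (auto simp: implication_class_def same_color_def dest: symD)

lemma color_classes_iff_same_color:
  assumes "sym E"
  shows "(\<exists>C\<in>color_classes E. e \<in> C \<and> f \<in> C) \<longleftrightarrow> same_color E e f"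
proof
  assume "\<exists>C\<in>color_classes E. e \<in> C \<and> f \<in> C"
  then obtain g where g: "g \<in> E"
    and "e \<in> implication_class E g \<union> (implication_class E g)\<inverse>"
    and "f \<in> implication_class E g \<union> (implication_class E g)\<inverse>"
    unfolding color_classes_def implication_classes_def by blast
  then have "same_color E e g" "same_color E g f"
    using mem_color_class_iff[OF assms g] same_color_sym[OF assms] by blast+
  then show "same_color E e f"
    by (rule same_color_trans[OF assms])
next
  assume ef: "same_color E e f"
  then have e: "e \<in> E"
    by (simp add: same_color_def)
  let ?C = "implication_class E e \<union> (implication_class E e)\<inverse>"
  have "e \<in> ?C" "f \<in> ?C"
    using mem_color_class_iff[OF assms e] same_color_refl[OF e] ef by blast+
  moreover have "?C \<in> color_classes E"
    using e unfolding color_classes_def implication_classes_def by blast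
  ultimately show "\<exists>C\<in>color_classes E. e \<in> C \<and> f \<in> C"
    by (intro bexI[of _ ?C] conjI)
qed

lemma complete_edges_iff [simp]: "(a, b) \<in> complete_edges S \<longleftrightarrow> a \<in> S \<and> b \<in> S \<and> a \<noteq> b"
  by (simp add: complete_edges_def)

lemma complete_edges_mono: "U \<subseteq> T \<Longrightarrow> complete_edges U \<subseteq> complete_edges T"
  by (auto simp: complete_edges_def)

lemma simplex_complete_edges: "simplex V E S \<Longrightarrow> (a, b) \<in> complete_edges S \<Longrightarrow> (a, b) \<in> E"
  unfolding simplex_def by blast

lemma simplex_obtain_other_vertex:
  assumes "simplex V E S" "s \<in> S"
  obtains s' where "s' \<in> S" "s' \<noteq> s"
proof -
  have "\<not> S \<subseteq> {s}"
    using assms(1) card_mono[of "{s}" S] unfolding simplex_def by auto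
  then show ?thesis
    using that by blast
qed

lemma simplex_iff_same_color:
  assumes "sym E"
  shows "simplex V E S \<longleftrightarrow> finite S \<and> 2 \<le> card S \<and> S \<subseteq> V \<and> complete_edges S \<subseteq> E \<and>
    (\<forall>a b c d. (a, b) \<in> complete_edges S \<longrightarrow> (c, d) \<in> complete_edges S \<longrightarrow>
       {a, b} \<noteq> {c, d} \<longrightarrow> \<not> same_color E (a, b) (c, d))"
  by (simp only: simplex_def color_classes_iff_same_color[OF assms])

lemma simplex_edges_not_same_color:
  assumes "sym E" "simplex V E S" "(a, b) \<in> complete_edges S" "(c, d) \<in> complete_edges S"
    "{a, b} \<noteq> {c, d}"
  shows "\<not> same_color E (a, b) (c, d)"
  using assms(2-5) unfolding simplex_iff_same_color[OF assms(1)] by blast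

lemma mem_multiplex_iff:
  assumes "sym E"
  shows "e \<in> multiplex E S \<longleftrightarrow> (\<exists>a b. (a, b) \<in> complete_edges S \<and> same_color E (a, b) e)"
proof -
  have "e \<in> multiplex E S \<longleftrightarrow>
      (\<exists>a b. (a, b) \<in> complete_edges S \<and> (\<exists>C\<in>color_classes E. (a, b) \<in> C \<and> e \<in> C))"
    unfolding multiplex_def by (auto simp flip: ex_in_conv)
  then show ?thesis
    by (simp only: color_classes_iff_same_color[OF assms])
qed

lemma multiplex_same_color_closed:
  assumes "sym E" "e \<in> multiplex E S" "same_color E e f"
  shows "f \<in> multiplex E S"
proof -
  obtain a b where "(a, b) \<in> complete_edges S" "same_color E (a, b) e"
    using assms(2) mem_multiplex_iff[OF assms(1)] by blast
  then show ?thesis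
    using same_color_trans[OF assms(1) _ assms(3)] mem_multiplex_iff[OF assms(1)] by blast
qed

lemma multiplex_subset_edges:
  assumes "sym E"
  shows "multiplex E S \<subseteq> E"
proof
  fix e assume "e \<in> multiplex E S"
  then obtain a b where "same_color E (a, b) e"
    using mem_multiplex_iff[OF assms] by blast
  then show "e \<in> E"
    by (simp add: same_color_def)
qed

lemma multiplex_flip:
  assumes "sym E" "(x, y) \<in> multiplex E S"
  shows "(y, x) \<in> multiplex E S"
proof -
  have "(x, y) \<in> E"
    using multiplex_subset_edges[OF assms(1)] assms(2) by blast
  then have "same_color E (x, y) (y, x)"
    using same_color_refl same_color_flip_right[OF assms(1), of "(x, y)" y x] by blast
  then show ?thesis
    using multiplex_same_color_closed[OF assms] by blast
qed

lemma mem_spanned_multiplex_iff: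
  assumes "sym E"
  shows "x \<in> spanned (multiplex E S) \<longleftrightarrow> (\<exists>y. (x, y) \<in> multiplex E S)"
proof
  assume "x \<in> spanned (multiplex E S)"
  then obtain y where "(x, y) \<in> multiplex E S \<or> (y, x) \<in> multiplex E S"
    unfolding spanned_def by blast
  then show "\<exists>y. (x, y) \<in> multiplex E S"
    using multiplex_flip[OF assms] by blast
qed (auto simp: spanned_def)

lemma complete_edges_subset_multiplex:
  assumes "sym E" "simplex V E S"
  shows "complete_edges S \<subseteq> multiplex E S"
proof
  fix e assume e: "e \<in> complete_edges S"
  then obtain a b where "e = (a, b)"
    by (cases e)
  then show "e \<in> multiplex E S"
    using e same_color_refl[OF simplex_complete_edges[OF assms(2)]] mem_multiplex_iff[OF assms(1)]
    by blast
qed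

lemma simplex_subset_spanned_multiplex:
  assumes "sym E" "simplex V E S"
  shows "S \<subseteq> spanned (multiplex E S)"
proof
  fix s assume "s \<in> S"
  moreover obtain s' where "s' \<in> S" "s' \<noteq> s"
    using simplex_obtain_other_vertex[OF assms(2) \<open>s \<in> S\<close>] .
  ultimately have "(s, s') \<in> multiplex E S"
    using complete_edges_subset_multiplex[OF assms] by auto
  then show "s \<in> spanned (multiplex E S)"
    unfolding spanned_def by blast
qed

lemma sym_iff: "sym E \<Longrightarrow> (a, b) \<in> E \<longleftrightarrow> (b, a) \<in> E"
  by (auto dest: symD)

lemma partitive_subset: "partitive V E Y \<Longrightarrow> Y \<subseteq> V"
  by (simp add: partitive_def)

lemma partitiveD:
  "partitive V E Y \<Longrightarrow> a \<in> Y \<Longrightarrow> b \<in> Y \<Longrightarrow> c \<in> V \<Longrightarrow> c \<notin> Y \<Longrightarrow>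
    (a, c) \<in> E \<longleftrightarrow> (b, c) \<in> E"
  unfolding partitive_def by blast

lemma partitiveI_sym:
  assumes "sym E" "Y \<subseteq> V"
    and "\<And>a b c. a \<in> Y \<Longrightarrow> b \<in> Y \<Longrightarrow> c \<in> V \<Longrightarrow> c \<notin> Y \<Longrightarrow> (a, c) \<in> E \<longleftrightarrow> (b, c) \<in> E"
  shows "partitive V E Y"
  using assms sym_iff[OF assms(1)] unfolding partitive_def by blast

lemma partitive_Diff:
  assumes sym: "sym E" and X: "partitive V E X" and Y: "partitive V E Y"
    and r: "r \<in> Y" "r \<notin> X"
  shows "partitive V E (X - Y)"
proof (rule partitiveI_sym[OF sym])
  show "X - Y \<subseteq> V"
    using partitive_subset[OF X] by blast
next
  fix a b c assume a: "a \<in> X - Y" and b: "b \<in> X - Y" and c: "c \<in> V" "c \<notin> X - Y"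
  show "(a, c) \<in> E \<longleftrightarrow> (b, c) \<in> E"
  proof (cases "c \<in> X")
    case False
    then show ?thesis
      using partitiveD[OF X] a b c by blast
  next
    case True
    then have "c \<in> Y"
      using c by blast
    have "a \<in> V" "b \<in> V" "r \<in> V"
      using a b r partitive_subset[OF X] partitive_subset[OF Y] by auto
    then have "(c, a) \<in> E \<longleftrightarrow> (r, a) \<in> E" "(c, b) \<in> E \<longleftrightarrow> (r, b) \<in> E"
      and "(a, r) \<in> E \<longleftrightarrow> (b, r) \<in> E"
      using partitiveD[OF Y \<open>c \<in> Y\<close> r(1)] partitiveD[OF X _ _ _ r(2)] a b by auto
    then show ?thesis
      using sym_iff[OF sym] by metis
  qed
qed

lemma partitive_sym_diff:
  assumes sym: "sym E" and X: "partitive V E X" and Y: "partitive V E Y"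
    and p: "p \<in> X" "p \<in> Y" and q: "q \<in> X" "q \<notin> Y" and r: "r \<in> Y" "r \<notin> X"
  shows "partitive V E ((X - Y) \<union> (Y - X))"
proof (rule partitiveI_sym[OF sym])
  show "(X - Y) \<union> (Y - X) \<subseteq> V"
    using partitive_subset[OF X] partitive_subset[OF Y] by blast
next
  fix a b c assume a: "a \<in> (X - Y) \<union> (Y - X)" and b: "b \<in> (X - Y) \<union> (Y - X)"
    and c: "c \<in> V" "c \<notin> (X - Y) \<union> (Y - X)"
  have "\<exists>v. \<forall>z \<in> (X - Y) \<union> (Y - X). (z, c) \<in> E \<longleftrightarrow> (v, c) \<in> E"
  proof (cases "c \<in> X")
    case False
    then have "c \<notin> Y"
      using c by blast
    then show ?thesis
      using partitiveD[OF X _ p(1) c(1) False] partitiveD[OF Y _ p(2) c(1)] by blast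
  next
    case True
    then have "c \<in> Y"
      using c by blast
    have "q \<in> V" "r \<in> V"
      using q r partitive_subset[OF X] partitive_subset[OF Y] by auto
    then have "(c, q) \<in> E \<longleftrightarrow> (r, q) \<in> E" "(c, r) \<in> E \<longleftrightarrow> (q, r) \<in> E"
      using partitiveD[OF Y \<open>c \<in> Y\<close> r(1)] partitiveD[OF X True q(1)] q r by auto
    then have qr: "(q, c) \<in> E \<longleftrightarrow> (r, c) \<in> E"
      using sym_iff[OF sym] by metis
    have "(z, c) \<in> E \<longleftrightarrow> (q, c) \<in> E" if "z \<in> X - Y" for z
      using partitiveD[OF partitive_Diff[OF sym X Y r] that _ c(1)] q c by blast
    moreover have "(z, c) \<in> E \<longleftrightarrow> (r, c) \<in> E" if "z \<in> Y - X" for z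
      using partitiveD[OF partitive_Diff[OF sym Y X q] that _ c(1)] r c by blast
    ultimately show ?thesis
      using qr by blast
  qed
  then show "(a, c) \<in> E \<longleftrightarrow> (b, c) \<in> E"
    using a b by blast
qed

lemma multiplex_edge_ends_agree:
  assumes sym: "sym E" and uw: "(u, w) \<in> multiplex E S" and c: "c \<notin> spanned (multiplex E S)"
  shows "(u, c) \<in> E \<longleftrightarrow> (w, c) \<in> E"
proof -
  have "(y, c) \<in> E" if xy: "(x, y) \<in> multiplex E S" and xc: "(x, c) \<in> E" for x y
  proof (rule ccontr)
    assume "(y, c) \<notin> E"
    moreover have "(x, y) \<in> E"
      using multiplex_subset_edges[OF sym] xy by blast
    ultimately have "((x, y), (x, c)) \<in> Gamma E"
      using xc by simp
    then have "(x, c) \<in> multiplex E S"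
      using multiplex_same_color_closed[OF sym xy] same_color_if_rtrancl_Gamma \<open>(x, y) \<in> E\<close>
      by blast
    then show False
      using c unfolding spanned_def by blast
  qed
  then show ?thesis
    using uw multiplex_flip[OF sym uw] by blast
qed

lemma rtrancl_Gamma_ends_agree:
  assumes sym: "sym E" and ab: "(a, b) \<in> multiplex E S" and c: "c \<notin> spanned (multiplex E S)"
    and path: "((a, b), (x, y)) \<in> (Gamma E)\<^sup>*"
  shows "((x, c) \<in> E \<longleftrightarrow> (a, c) \<in> E) \<and> ((y, c) \<in> E \<longleftrightarrow> (a, c) \<in> E)"
  using path
proof (induction rule: rtrancl_induct2)
  case refl
  then show ?case
    using multiplex_edge_ends_agree[OF sym ab c] by blast
next
  case (step x y x' y')
  have "(a, b) \<in> E"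
    using multiplex_subset_edges[OF sym] ab by blast
  then have "same_color E (a, b) (x', y')"
    using same_color_if_rtrancl_Gamma rtrancl_into_rtrancl[OF step.hyps] by blast
  then have "(x', c) \<in> E \<longleftrightarrow> (y', c) \<in> E"
    using multiplex_edge_ends_agree[OF sym _ c] multiplex_same_color_closed[OF sym ab] by blast
  moreover have "x = x' \<or> y = y'"
    using step.hyps(2) by auto
  ultimately show ?case
    using step.IH by blast
qed

lemma spanned_multiplex_neighbors_agree:
  assumes sym: "sym E" and S: "simplex V E S"
    and x: "x \<in> spanned (multiplex E S)" and s: "s \<in> S" and c: "c \<notin> spanned (multiplex E S)"
  shows "(x, c) \<in> E \<longleftrightarrow> (s, c) \<in> E"
proof -
  obtain y where "(x, y) \<in> multiplex E S"
    using x mem_spanned_multiplex_iff[OF sym] by blast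
  then obtain a b where ab: "(a, b) \<in> complete_edges S" and "same_color E (a, b) (x, y)"
    using mem_multiplex_iff[OF sym] by blast
  then have "((a, b), (x, y)) \<in> (Gamma E)\<^sup>* \<or> ((a, b), (y, x)) \<in> (Gamma E)\<^sup>*"
    by (simp add: same_color_def)
  moreover have ab_multiplex: "(a, b) \<in> multiplex E S"
    using complete_edges_subset_multiplex[OF sym S] ab by blast
  ultimately have "(x, c) \<in> E \<longleftrightarrow> (a, c) \<in> E"
    using rtrancl_Gamma_ends_agree[OF sym ab_multiplex c] by blast
  moreover have "(a, c) \<in> E \<longleftrightarrow> (s, c) \<in> E"
  proof (cases "a = s")
    case False
    then have "(a, s) \<in> multiplex E S"
      using complete_edges_subset_multiplex[OF sym S] ab s by auto
    then show ?thesis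
      by (rule multiplex_edge_ends_agree[OF sym _ c])
  qed simp
  ultimately show ?thesis
    by blast
qed

lemma partitive_spanned_multiplex:
  assumes sym: "sym E" and EV: "E \<subseteq> V \<times> V" and S: "simplex V E S"
  shows "partitive V E (spanned (multiplex E S))"
proof (rule partitiveI_sym[OF sym])
  show "spanned (multiplex E S) \<subseteq> V"
    using multiplex_subset_edges[OF sym] EV mem_spanned_multiplex_iff[OF sym] by blast
next
  obtain s where "s \<in> S"
    using S unfolding simplex_def by fastforce
  then show "(a, c) \<in> E \<longleftrightarrow> (b, c) \<in> E"
    if "a \<in> spanned (multiplex E S)" "b \<in> spanned (multiplex E S)"
      "c \<in> V" "c \<notin> spanned (multiplex E S)" for a b c
    using spanned_multiplex_neighbors_agree[OF sym S] that by blast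
qed

lemma partitive_rtrancl_Gamma_closed:
  assumes sym: "sym E" and EV: "E \<subseteq> V \<times> V" and Y: "partitive V E Y"
    and u: "u \<in> Y" and w: "w \<in> Y" and path: "((u, w), (x, y)) \<in> (Gamma E)\<^sup>*"
  shows "x \<in> Y \<and> y \<in> Y"
  using path
proof (induction rule: rtrancl_induct2)
  case refl
  then show ?case
    using u w by blast
next
  case (step x y x' y')
  have E': "(x', y') \<in> E"
    using step.hyps(2) by auto
  then have V': "x' \<in> V" "y' \<in> V"
    using EV by auto
  from step.hyps(2) have "x = x' \<and> (y, y') \<notin> E \<or> y = y' \<and> (x, x') \<notin> E"
    by auto
  then show ?case
  proof
    assume "x = x' \<and> (y, y') \<notin> E"
    then show ?case
      using partitiveD[OF Y, of x y y'] step.IH V' E' by blast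
  next
    assume "y = y' \<and> (x, x') \<notin> E"
    then show ?case
      using partitiveD[OF Y, of y x x'] step.IH V' E' sym_iff[OF sym] by blast
  qed
qed

lemma partitive_same_color_closed:
  assumes "sym E" "E \<subseteq> V \<times> V" "partitive V E Y" "u \<in> Y" "w \<in> Y"
    and "same_color E (u, w) (x, y)"
  shows "x \<in> Y \<and> y \<in> Y"
proof -
  have "((u, w), (x, y)) \<in> (Gamma E)\<^sup>* \<or> ((u, w), (y, x)) \<in> (Gamma E)\<^sup>*"
    using assms(6) by (simp add: same_color_def)
  then show ?thesis
    using partitive_rtrancl_Gamma_closed[OF assms(1-5)] by blast
qed

lemma spanned_multiplex_subset_partitive:
  assumes sym: "sym E" and EV: "E \<subseteq> V \<times> V" and Y: "partitive V E Y" and SY: "S \<subseteq> Y"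
  shows "spanned (multiplex E S) \<subseteq> Y"
proof
  fix x assume "x \<in> spanned (multiplex E S)"
  then obtain y where "(x, y) \<in> multiplex E S"
    using mem_spanned_multiplex_iff[OF sym] by blast
  then obtain a b where ab: "(a, b) \<in> complete_edges S" and "same_color E (a, b) (x, y)"
    using mem_multiplex_iff[OF sym] by blast
  moreover have "a \<in> Y" "b \<in> Y"
    using ab SY by auto
  ultimately show "x \<in> Y"
    using partitive_same_color_closed[OF sym EV Y] by blast
qed

lemma join_rtrancl_Gamma:
  assumes sym: "sym E" and EV: "E \<subseteq> V \<times> V" and AB: "partitive V E (A \<union> B)"
    and join: "\<forall>a\<in>A. \<forall>b\<in>B. (a, b) \<in> E" and c: "\<forall>a\<in>A. (c, a) \<in> E"
    and a0: "a0 \<in> A" and b0: "b0 \<in> B" and path: "((a0, b0), (x, y)) \<in> (Gamma E)\<^sup>*"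
  shows "x \<in> A \<and> y \<in> B \<and> ((c, a0), (c, x)) \<in> (Gamma E)\<^sup>*"
  using path
proof (induction rule: rtrancl_induct2)
  case refl
  then show ?case
    using a0 b0 by blast
next
  case (step x y x' y')
  have E': "(x', y') \<in> E"
    using step.hyps(2) by auto
  then have V': "x' \<in> V" "y' \<in> V"
    using EV by auto
  from step.hyps(2) have "x = x' \<and> (y, y') \<notin> E \<or> y = y' \<and> (x, x') \<notin> E"
    by auto
  then show ?case
  proof
    assume x': "x = x' \<and> (y, y') \<notin> E"
    then have "y' \<notin> A"
      using join step.IH sym_iff[OF sym] by blast
    moreover have "y' \<in> A \<union> B"
      using partitiveD[OF AB, of x y y'] step.IH V' E' x' by blast
    ultimately show ?case
      using step.IH x' by blast
  next
    assume y': "y = y' \<and> (x, x') \<notin> E"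
    then have "x' \<notin> B"
      using join step.IH by blast
    moreover have "x' \<in> A \<union> B"
      using partitiveD[OF AB, of y x x'] step.IH V' E' y' sym_iff[OF sym] by blast
    ultimately have "x' \<in> A"
      by blast
    then have "((c, x), (c, x')) \<in> Gamma E"
      using c step.IH y' by simp
    then show ?case
      using step.IH \<open>x' \<in> A\<close> y' by (meson rtrancl_into_rtrancl)
  qed
qed

lemma join_same_color:
  assumes sym: "sym E" and EV: "E \<subseteq> V \<times> V" and AB: "partitive V E (A \<union> B)"
    and disjoint: "A \<inter> B = {}"
    and join: "\<forall>a\<in>A. \<forall>b\<in>B. (a, b) \<in> E" and c: "\<forall>a\<in>A. (c, a) \<in> E"
    and a: "a \<in> A" "a' \<in> A" and b: "b \<in> B" and same: "same_color E (a, b) (a', b)"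
  shows "same_color E (c, a) (c, a')"
proof -
  note paths = join_rtrancl_Gamma[OF sym EV AB join c a(1) b]
  have "((a, b), (a', b)) \<in> (Gamma E)\<^sup>* \<or> ((a, b), (b, a')) \<in> (Gamma E)\<^sup>*"
    using same by (simp add: same_color_def)
  then have "((a, b), (a', b)) \<in> (Gamma E)\<^sup>*"
    using paths[of b a'] disjoint b by blast
  then show ?thesis
    using paths same_color_if_rtrancl_Gamma c a(1) by blast
qed

lemma same_color_doubleton_left:
  "sym E \<Longrightarrow> {a, b} = {c, d} \<Longrightarrow> same_color E (a, b) f \<longleftrightarrow> same_color E (c, d) f"
  by (auto simp: doubleton_eq_iff)

lemma same_color_doubleton_right:
  "sym E \<Longrightarrow> {a, b} = {c, d} \<Longrightarrow> same_color E f (a, b) \<longleftrightarrow> same_color E f (c, d)"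
  by (auto simp: doubleton_eq_iff)

lemma simplex_subset:
  assumes T: "simplex V E T" and UT: "U \<subseteq> T" and card: "2 \<le> card U"
  shows "simplex V E U"
proof -
  have "finite U" "U \<subseteq> V" "complete_edges U \<subseteq> E"
    using T finite_subset[OF UT] complete_edges_mono[OF UT] UT unfolding simplex_def by auto
  moreover have "\<forall>a b c d. (a, b) \<in> complete_edges U \<longrightarrow> (c, d) \<in> complete_edges U \<longrightarrow>
      {a, b} \<noteq> {c, d} \<longrightarrow> \<not> (\<exists>C\<in>color_classes E. (a, b) \<in> C \<and> (c, d) \<in> C)"
    using T complete_edges_mono[OF UT] unfolding simplex_def by blast
  ultimately show ?thesis
    using card unfolding simplex_def by blast
qed

lemma complete_edges_insert_cases:
  assumes "(a, b) \<in> complete_edges (insert r S)"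
  obtains "(a, b) \<in> complete_edges S" | s where "s \<in> S" "{a, b} = {r, s}"
proof (cases "a = r \<or> b = r")
  case True
  then show ?thesis
    using assms that(2)[of b] that(2)[of a] by (auto simp: insert_commute)
next
  case False
  then show ?thesis
    using assms that(1) by auto
qed

lemma complete_edges_insert_subset:
  assumes "sym E" "complete_edges S \<subseteq> E" "\<forall>s\<in>S. (r, s) \<in> E"
  shows "complete_edges (insert r S) \<subseteq> E"
proof clarify
  fix a b assume "(a, b) \<in> complete_edges (insert r S)"
  then show "(a, b) \<in> E"
    by (cases rule: complete_edges_insert_cases)
      (use assms sym_iff[OF assms(1)] in \<open>auto simp: doubleton_eq_iff\<close>)
qed

lemma simplex_insert:
  assumes sym: "sym E" and S: "simplex V E S" and r: "r \<in> V" "r \<notin> S"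
    and adjacent: "\<forall>s\<in>S. (r, s) \<in> E"
    and new_colors: "\<forall>s\<in>S. \<forall>e\<in>complete_edges S. \<not> same_color E (r, s) e"
    and distinct_colors: "\<forall>s\<in>S. \<forall>s'\<in>S. s \<noteq> s' \<longrightarrow> \<not> same_color E (r, s) (r, s')"
  shows "simplex V E (insert r S)"
  unfolding simplex_iff_same_color[OF sym]
proof (intro conjI allI impI notI)
  show "finite (insert r S)" "2 \<le> card (insert r S)" "insert r S \<subseteq> V"
    using S r unfolding simplex_def by auto
  show "complete_edges (insert r S) \<subseteq> E"
    using complete_edges_insert_subset[OF sym _ adjacent] S unfolding simplex_def by blast
next
  fix a b c d
  assume ab: "(a, b) \<in> complete_edges (insert r S)" and cd: "(c, d) \<in> complete_edges (insert r S)"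
    and ne: "{a, b} \<noteq> {c, d}" and same: "same_color E (a, b) (c, d)"
  from ab show False
  proof (cases rule: complete_edges_insert_cases)
    case ab_old: 1
    from cd show False
    proof (cases rule: complete_edges_insert_cases)
      case 1
      then show False
        using simplex_edges_not_same_color[OF sym S ab_old _ ne] same by blast
    next
      case (2 s)
      then show False
        using new_colors ab_old same same_color_sym[OF sym]
          same_color_doubleton_right[OF sym] by metis
    qed
  next
    case (2 s)
    then have same': "same_color E (r, s) (c, d)"
      using same same_color_doubleton_left[OF sym] by blast
    from cd show False
    proof (cases rule: complete_edges_insert_cases)
      case 1
      then show False
        using new_colors \<open>s \<in> S\<close> same' by blast
    next
      case (2 s')
      then show False
        using distinct_colors \<open>s \<in> S\<close> \<open>{a, b} = {r, s}\<close> same' ne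
          same_color_doubleton_right[OF sym] by metis
    qed
  qed
qed

lemma apex_Gamma_step:
  assumes sym: "sym E"
    and x: "(v, x) \<in> E" "\<not> same_color E (v, x) e"
    and y: "(v, y) \<in> E" "\<not> same_color E (v, y) e"
    and step: "(x, y') \<in> E" "(y, y') \<notin> E" and same: "same_color E (x, y') e"
  shows "v \<noteq> y' \<and> (v, y') \<in> E \<and> \<not> same_color E (v, y') e"
proof (intro conjI)
  have xv: "(x, v) \<in> E"
    using x(1) sym_iff[OF sym] by blast
  show "v \<noteq> y'"
    using same x(2) sym by auto
  show vy': "(v, y') \<in> E"
  proof (rule ccontr)
    assume "(v, y') \<notin> E"
    then have "((x, v), (x, y')) \<in> Gamma E"
      using xv step(1) by simp
    then have "same_color E (x, v) e"
      using same_color_if_rtrancl_Gamma[OF _ xv] same_color_trans[OF sym _ same] by blast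
    then show False
      using x(2) sym by simp
  qed
  have "((v, y), (v, y')) \<in> Gamma E"
    using y(1) vy' step(2) by simp
  then have "same_color E (v, y) (v, y')"
    using same_color_if_rtrancl_Gamma y(1) by blast
  then show "\<not> same_color E (v, y') e"
    using y(2) same_color_trans[OF sym] by blast
qed

lemma apex_rtrancl_Gamma:
  assumes sym: "sym E" and ab: "(a, b) \<in> E"
    and va: "v \<noteq> a" "(v, a) \<in> E" "\<not> same_color E (v, a) (a, b)"
    and vb: "v \<noteq> b" "(v, b) \<in> E" "\<not> same_color E (v, b) (a, b)"
    and path: "((a, b), (x, y)) \<in> (Gamma E)\<^sup>*"
  shows "v \<noteq> x \<and> (v, x) \<in> E \<and> \<not> same_color E (v, x) (a, b) \<and>
    v \<noteq> y \<and> (v, y) \<in> E \<and> \<not> same_color E (v, y) (a, b)"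
  using path
proof (induction rule: rtrancl_induct2)
  case refl
  then show ?case
    using va vb by blast
next
  case (step x y x' y')
  have "same_color E (x', y') (a, b)"
    using same_color_if_rtrancl_Gamma[OF rtrancl_into_rtrancl[OF step.hyps] ab]
      same_color_sym[OF sym] by blast
  moreover have E': "(x', y') \<in> E"
    using step.hyps(2) by auto
  moreover from step.hyps(2) have "x = x' \<and> (y, y') \<notin> E \<or> y = y' \<and> (x, x') \<notin> E"
    by auto
  ultimately show ?case
  proof (elim disjE conjE)
    assume "same_color E (x', y') (a, b)" "x = x'" "(y, y') \<notin> E"
    then show ?case
      using apex_Gamma_step[OF sym, of v x "(a, b)" y y'] step.IH E' by blast
  next
    assume "same_color E (x', y') (a, b)" "y = y'" "(x, x') \<notin> E"
    moreover have "(y, x') \<in> E"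
      using E' \<open>y = y'\<close> sym_iff[OF sym] by blast
    ultimately show ?case
      using apex_Gamma_step[OF sym, of v y "(a, b)" x x'] step.IH sym by auto
  qed
qed

lemma simplex_vertex_not_spanned:
  assumes sym: "sym E" and T: "simplex V E T" and ST: "S \<subseteq> T" and v: "v \<in> T" "v \<notin> S"
  shows "v \<notin> spanned (multiplex E S)"
proof
  assume "v \<in> spanned (multiplex E S)"
  then obtain y where "(v, y) \<in> multiplex E S"
    using mem_spanned_multiplex_iff[OF sym] by blast
  then obtain a b where ab: "(a, b) \<in> complete_edges S" and same: "same_color E (a, b) (v, y)"
    using mem_multiplex_iff[OF sym] by blast
  have "(a, b) \<in> complete_edges T" "(v, a) \<in> complete_edges T" "(v, b) \<in> complete_edges T"
    using ab ST v by auto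
  moreover have "{v, a} \<noteq> {a, b}" "{v, b} \<noteq> {a, b}"
    using ab v by (auto simp: doubleton_eq_iff)
  ultimately have "\<not> same_color E (v, a) (a, b)" "\<not> same_color E (v, b) (a, b)"
    "(a, b) \<in> E" "(v, a) \<in> E" "(v, b) \<in> E"
    using simplex_edges_not_same_color[OF sym T] simplex_complete_edges[OF T] by blast+
  moreover have "((a, b), (v, y)) \<in> (Gamma E)\<^sup>* \<or> ((a, b), (y, v)) \<in> (Gamma E)\<^sup>*"
    using same by (simp add: same_color_def)
  moreover have "v \<noteq> a" "v \<noteq> b"
    using ab v by auto
  ultimately show False
    using apex_rtrancl_Gamma[OF sym] by blast
qed

lemma overlapping_partitive_adjacencies:
  assumes sym: "sym E" and EV: "E \<subseteq> V \<times> V" and S: "simplex V E S"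
    and Y: "partitive V E Y"
    and X_def: "X = spanned (multiplex E S)"
    and p: "p \<in> X \<inter> Y" and X_not_in_Y: "\<not> X \<subseteq> Y" and r: "r \<in> Y - X"
  obtains s1 s2 where "s1 \<in> S \<inter> Y" "s2 \<in> S - Y"
    "\<forall>y\<in>Y. (s2, y) \<in> E" "\<forall>q\<in>X - Y. (s1, q) \<in> E" "\<forall>x\<in>X. \<forall>y\<in>Y - X. (x, y) \<in> E"
proof -
  have X: "partitive V E X" and SX: "S \<subseteq> X"
    unfolding X_def using partitive_spanned_multiplex[OF sym EV S]
      simplex_subset_spanned_multiplex[OF sym S] by blast+
  have XV: "X \<subseteq> V" and YV: "Y \<subseteq> V"
    using partitive_subset X Y by blast+
  obtain s2 where s2: "s2 \<in> S" "s2 \<notin> Y"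
    using spanned_multiplex_subset_partitive[OF sym EV Y] X_not_in_Y X_def by blast
  have XY: "partitive V E (X - Y)"
    using partitive_Diff[OF sym X Y] r by blast
  obtain s1 where s1: "s1 \<in> S" "s1 \<in> Y"
  proof -
    have "\<not> S \<subseteq> X - Y"
      using spanned_multiplex_subset_partitive[OF sym EV XY] p X_def by blast
    then show ?thesis
      using that SX by blast
  qed
  have "(s1, s2) \<in> E"
    using simplex_complete_edges[OF S] s1 s2 by auto
  then have s2_Y: "\<forall>y\<in>Y. (s2, y) \<in> E"
    using partitiveD[OF Y _ s1(2) _ s2(2)] s2 SX XV sym_iff[OF sym] by blast
  have "\<forall>x\<in>X. \<forall>y\<in>Y - X. (x, y) \<in> E"
    using partitiveD[OF X _ _ _] s2_Y s2 SX YV by blast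
  moreover have "\<forall>q\<in>X - Y. (s1, q) \<in> E"
    using partitiveD[OF XY _ _ _, of _ s2 s1] \<open>(s1, s2) \<in> E\<close> s1 s2 SX XV sym_iff[OF sym]
    by blast
  ultimately show ?thesis
    using that s1 s2 s2_Y by blast
qed

lemma join_distinct_colors:
  assumes sym: "sym E" and EV: "E \<subseteq> V \<times> V" and S: "simplex V E S"
    and AB: "partitive V E (A \<union> B)" and disjoint: "A \<inter> B = {}"
    and join: "\<forall>a\<in>A. \<forall>b\<in>B. (a, b) \<in> E"
    and c: "c \<in> S" "c \<notin> A" "\<forall>a\<in>A. (c, a) \<in> E"
    and s: "s \<in> S \<inter> A" "s' \<in> S \<inter> A" "s \<noteq> s'" and r: "r \<in> B"
  shows "\<not> same_color E (r, s) (r, s')"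
proof
  assume "same_color E (r, s) (r, s')"
  then have "same_color E (s, r) (s', r)"
    using sym by simp
  then have "same_color E (c, s) (c, s')"
    using join_same_color[OF sym EV AB disjoint join c(3)] s r by blast
  moreover have "(c, s) \<in> complete_edges S" "(c, s') \<in> complete_edges S" "{c, s} \<noteq> {c, s'}"
    using c s by (auto simp: doubleton_eq_iff)
  ultimately show False
    using simplex_edges_not_same_color[OF sym S] by blast
qed

lemma overlapping_partitive_distinct_colors:
  assumes sym: "sym E" and EV: "E \<subseteq> V \<times> V" and S: "simplex V E S"
    and Y: "partitive V E Y"
    and X_def: "X = spanned (multiplex E S)"
    and p: "p \<in> X \<inter> Y" and X_not_in_Y: "\<not> X \<subseteq> Y" and r: "r \<in> Y - X"
    and s: "s \<in> S" "s' \<in> S" "s \<noteq> s'"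
  shows "\<not> same_color E (r, s) (r, s')"
proof -
  obtain s1 s2 where s1: "s1 \<in> S \<inter> Y" and s2: "s2 \<in> S - Y"
    and s2_Y: "\<forall>y\<in>Y. (s2, y) \<in> E" and s1_XY: "\<forall>q\<in>X - Y. (s1, q) \<in> E"
    and across: "\<forall>x\<in>X. \<forall>y\<in>Y - X. (x, y) \<in> E"
    using overlapping_partitive_adjacencies[OF assms(1-8)] .
  have X: "partitive V E X" and SX: "S \<subseteq> X"
    unfolding X_def using partitive_spanned_multiplex[OF sym EV S]
      simplex_subset_spanned_multiplex[OF sym S] by blast+
  consider "s \<in> Y" "s' \<in> Y" | "s \<notin> Y" "s' \<notin> Y" | "s \<in> Y \<longleftrightarrow> s' \<notin> Y"
    by blast
  then show ?thesis
  proof cases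
    case 1
    have "(X \<inter> Y) \<union> (Y - X) = Y"
      by blast
    with Y have "partitive V E ((X \<inter> Y) \<union> (Y - X))"
      by simp
    then show ?thesis
      using join_distinct_colors[OF sym EV S _ _ _ _ _ _ _ _ s(3) r, of "X \<inter> Y" s2]
        1 s SX s2 s2_Y across by auto
  next
    case 2
    have "partitive V E ((X - Y) \<union> (Y - X))"
      using partitive_sym_diff[OF sym X Y] p s2 SX r by blast
    then show ?thesis
      using join_distinct_colors[OF sym EV S _ _ _ _ _ _ _ _ s(3) r, of "X - Y" s1]
        2 s SX s1 s1_XY across by auto
  next
    case 3
    then show ?thesis
      using partitive_same_color_closed[OF sym EV Y] same_color_sym[OF sym] r by blast
  qed
qed

lemma overlapping_partitive_extends_simplex:
  assumes sym: "sym E" and EV: "E \<subseteq> V \<times> V" and S: "simplex V E S"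
    and Y: "partitive V E Y"
    and X_def: "X = spanned (multiplex E S)"
    and p: "p \<in> X \<inter> Y" and X_not_in_Y: "\<not> X \<subseteq> Y" and r: "r \<in> Y - X"
  shows "simplex V E (insert r S)"
proof (rule simplex_insert[OF sym S])
  have SX: "S \<subseteq> X"
    unfolding X_def using simplex_subset_spanned_multiplex[OF sym S] .
  show "r \<in> V" "r \<notin> S"
    using r SX partitive_subset[OF Y] by auto
  obtain s1 s2 where "\<forall>x\<in>X. \<forall>y\<in>Y - X. (x, y) \<in> E"
    using overlapping_partitive_adjacencies[OF assms] .
  then show "\<forall>s\<in>S. (r, s) \<in> E"
    using r SX sym_iff[OF sym] by blast
  show "\<forall>s\<in>S. \<forall>e\<in>complete_edges S. \<not> same_color E (r, s) e"
  proof (intro ballI notI)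
    fix s e assume "e \<in> complete_edges S" "same_color E (r, s) e"
    then have "(r, s) \<in> multiplex E S"
      using multiplex_same_color_closed[OF sym] complete_edges_subset_multiplex[OF sym S]
        same_color_sym[OF sym] by blast
    then show False
      using r X_def mem_spanned_multiplex_iff[OF sym] by blast
  qed
  show "\<forall>s\<in>S. \<forall>s'\<in>S. s \<noteq> s' \<longrightarrow> \<not> same_color E (r, s) (r, s')"
    using overlapping_partitive_distinct_colors[OF assms] by blast
qed

lemma maximal_simplex_strong_partitive:
  assumes sym: "sym E" and EV: "E \<subseteq> V \<times> V" and S: "maximal_simplex V E S"
  shows "strong_partitive V E (spanned (multiplex E S))"
proof -
  define X where "X = spanned (multiplex E S)"
  have simplex: "simplex V E S"
    using S unfolding maximal_simplex_def by blast
  have "X \<subseteq> Y \<or> Y \<subseteq> X" if Y: "partitive V E Y" and "X \<inter> Y \<noteq> {}" for Y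
  proof (rule ccontr)
    assume "\<not> (X \<subseteq> Y \<or> Y \<subseteq> X)"
    moreover obtain p where "p \<in> X \<inter> Y"
      using \<open>X \<inter> Y \<noteq> {}\<close> by blast
    ultimately obtain r where "simplex V E (insert r S)" "r \<notin> X"
      using overlapping_partitive_extends_simplex[OF sym EV simplex Y X_def] by blast
    moreover have "S \<subseteq> X"
      unfolding X_def using simplex_subset_spanned_multiplex[OF sym simplex] .
    ultimately show False
      using S unfolding maximal_simplex_def by blast
  qed
  then show ?thesis
    using partitive_spanned_multiplex[OF sym EV simplex]
    unfolding strong_partitive_def X_def by blast
qed

lemma simplex_exchange:
  assumes T: "simplex V E T" and ST: "S \<subseteq> T" and v: "v \<in> T" "v \<notin> S"
    and s: "s \<in> S" "s' \<in> S" "s \<noteq> s'"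
  shows "simplex V E (insert v (S - {s}))"
proof -
  have sub: "insert v (S - {s}) \<subseteq> T"
    using ST v by blast
  have "finite T"
    using T unfolding simplex_def by blast
  then have "finite (insert v (S - {s}))"
    by (rule finite_subset[OF sub])
  moreover have "{v, s'} \<subseteq> insert v (S - {s})" "v \<noteq> s'"
    using s v by auto
  ultimately have "2 \<le> card (insert v (S - {s}))"
    using card_mono[of "insert v (S - {s})" "{v, s'}"] by simp
  then show ?thesis
    by (rule simplex_subset[OF T sub])
qed

lemma strong_partitive_imp_maximal_simplex:
  assumes sym: "sym E" and EV: "E \<subseteq> V \<times> V" and S: "simplex V E S"
    and strong: "strong_partitive V E (spanned (multiplex E S))"
  shows "maximal_simplex V E S"
proof (rule ccontr)
  assume "\<not> maximal_simplex V E S"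
  then obtain T v where T: "simplex V E T" and ST: "S \<subseteq> T" and v: "v \<in> T" "v \<notin> S"
    using S unfolding maximal_simplex_def by blast
  obtain s where "s \<in> S"
    using S unfolding simplex_def by fastforce
  moreover obtain s' where "s' \<in> S" "s' \<noteq> s"
    using simplex_obtain_other_vertex[OF S \<open>s \<in> S\<close>] .
  ultimately have s: "s \<in> S" "s' \<in> S" "s \<noteq> s'"
    by auto
  define S' where "S' = insert v (S - {s})"
  have S': "simplex V E S'" and S'T: "S' \<subseteq> T"
    unfolding S'_def using simplex_exchange[OF T ST v s] ST v by blast+
  define X where "X = spanned (multiplex E S)"
  define Y where "Y = spanned (multiplex E S')"
  have SX: "S \<subseteq> X" and S'Y: "S' \<subseteq> Y"
    unfolding X_def Y_def
    using simplex_subset_spanned_multiplex[OF sym S] simplex_subset_spanned_multiplex[OF sym S'] .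
  have "s \<in> T" "s \<notin> S'"
    using s ST v unfolding S'_def by auto
  then have "s \<notin> Y"
    unfolding Y_def by (rule simplex_vertex_not_spanned[OF sym T S'T])
  moreover have "v \<notin> X"
    unfolding X_def using simplex_vertex_not_spanned[OF sym T ST v] .
  moreover have "s' \<in> X" "s' \<in> Y" "s \<in> X" "v \<in> Y"
    using SX S'Y s unfolding S'_def by auto
  moreover have "partitive V E Y"
    unfolding Y_def using partitive_spanned_multiplex[OF sym EV S'] .
  ultimately show False
    using strong unfolding strong_partitive_def X_def[symmetric] by blast
qed

theorem theorem3p9:
  fixes V :: "'a set" and E :: "('a \<times> 'a) set" and Vs :: "'a set" and M :: "('a \<times> 'a) set"
  assumes "undirected_graph V E"
    and "simplex V E Vs"
    and "M = multiplex E Vs"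
  shows "maximal_multiplex V E M \<longleftrightarrow> strong_partitive V E (spanned M)"
proof -
  have sym: "sym E" and EV: "E \<subseteq> V \<times> V"
    using assms(1) unfolding undirected_graph_def by auto
  show ?thesis
  proof
    assume "maximal_multiplex V E M"
    then obtain T where "maximal_simplex V E T" "M = multiplex E T"
      unfolding maximal_multiplex_def by blast
    then show "strong_partitive V E (spanned M)"
      using maximal_simplex_strong_partitive[OF sym EV] by blast
  next
    assume "strong_partitive V E (spanned M)"
    then show "maximal_multiplex V E M"
      using strong_partitive_imp_maximal_simplex[OF sym EV assms(2)] assms(3)
      unfolding maximal_multiplex_def by blast
  qed
qed

end
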